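(* Let $\Sigma$ be a finite alphabet with at least two symbols and $z\in\{B,A\}$. The set of isolated points of $(\Sigma^{\mathbb{N}},\tau_z)$ is exactly the set $\mathrm{Ult}$ of ultimately periodic words, and $\mathrm{Ult}$ is dense in $(\Sigma^{\mathbb{N}},\tau_z)$; consequently a subset of $(\Sigma^{\mathbb{N}},\tau_z)$ is dense if and only if it contains $\mathrm{Ult}$.
   Context: $\mathrm{Ult}=\{u\cdot v^\omega: u,v\in\Sigma^*, v\neq\emptyset\}$, the ultimately periodic infinite words. A language $L\subseteq\Sigma^{\mathbb{N}}$ is $\omega$-regular if accepted by a Büchi automaton $(\Sigma,Q,Q_i,Q_f,\delta)$ (a run on $\sigma$ is $(q_n)_n$ with $q_0\in Q_i$, $(q_n,\sigma(n),q_{n+1})\in\delta$; accepting iff $q_n\in Q_f$ for infinitely many $n$). $\tau_C$ is the Cantor topology on $\Sigma^{\mathbb{N}}$; $\tau_B$ is generated by the $\omega$-regular languages; $\tau_A$ is generated by the $\tau_C$-closed $\omega$-regular languages. A point $x$ is isolated if $\{x\}$ is open. *)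

theory Defs
  imports "HOL-Analysis.Analysis" "HOL-Library.Omega_Words_Fun"
begin

definition buchi_run :: "nat set \<Rightarrow> (nat \<times> 'a \<times> nat) set \<Rightarrow> 'a word \<Rightarrow> (nat \<Rightarrow> nat) \<Rightarrow> bool" where
  "buchi_run Qi \<delta> \<sigma> r \<longleftrightarrow> r 0 \<in> Qi \<and> (\<forall>n. (r n, \<sigma> n, r (Suc n)) \<in> \<delta>)"

definition buchi_lang :: "nat set \<Rightarrow> nat set \<Rightarrow> nat set \<Rightarrow> (nat \<times> 'a \<times> nat) set \<Rightarrow> 'a word set" where
  "buchi_lang Q Qi Qf \<delta> = {\<sigma>. \<exists>r. buchi_run Qi \<delta> \<sigma> r \<and> infinite {n. r n \<in> Qf}}"

definition omega_regular :: "'a word set \<Rightarrow> bool" where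
  "omega_regular L \<longleftrightarrow> (\<exists>Q Qi Qf \<delta>. finite Q \<and> Qi \<subseteq> Q \<and> Qf \<subseteq> Q \<and>
      \<delta> \<subseteq> Q \<times> UNIV \<times> Q \<and> L = buchi_lang Q Qi Qf \<delta>)"

definition ult :: "'a word set" where
  "ult = {u \<frown> v\<^sup>\<omega> | u v. v \<noteq> []}"

definition tau_C :: "'a word topology" where
  "tau_C = topology_generated_by {{\<sigma>. \<forall>i<length w. \<sigma> i = w ! i} | w. True}"

definition tau_B :: "'a word topology" where
  "tau_B = topology_generated_by {L. omega_regular L}"

definition tau_A :: "'a word topology" where
  "tau_A = topology_generated_by {L. omega_regular L \<and> closedin tau_C L}"

end

theory Submission
  imports Defs
begin

text \<open>A Buechi automaton accepting a word x has a run that passes infinitely often through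
  a final state; since it has finitely many states, some segment [a, b) of the run starts and
  ends in the same state and visits a final state. Repeating that segment forever yields an
  accepted ultimately periodic word. Doing this simultaneously for finitely many automata shows
  that every nonempty basic open set of tau_B or tau_A meets Ult, i.e. Ult is dense. Conversely,
  the singleton of an ultimately periodic word is recognised by a lasso-shaped automaton and is
  tau_C-closed, hence open in both topologies. A dense set must then contain every isolated
  point, and any superset of Ult is dense.\<close>

definition lasso_index :: "nat \<Rightarrow> nat \<Rightarrow> nat \<Rightarrow> nat" where
  "lasso_index a b n = (if n < a then n else a + (n - a) mod (b - a))"

lemma lasso_index_0: "lasso_index a b 0 = 0"
  by (simp add: lasso_index_def)

lemma lasso_index_less:
  assumes "a < b"
  shows "lasso_index a b n < b"
proof -
  have "(n - a) mod (b - a) < b - a" using assms by simp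
  then have "a + (n - a) mod (b - a) < b" using assms by linarith
  then show ?thesis using assms by (simp add: lasso_index_def)
qed

lemma lasso_index_idem: "lasso_index a b (lasso_index a b n) = lasso_index a b n"
  by (auto simp: lasso_index_def)

lemma lasso_index_Suc:
  assumes "a < b"
  shows "lasso_index a b (Suc n) =
    (if Suc (lasso_index a b n) = b then a else Suc (lasso_index a b n))"
proof (cases "n < a")
  case False
  define q where "q = (n - a) mod (b - a)"
  have "q < b - a" using assms by (simp add: q_def)
  moreover have "lasso_index a b n = a + q" using False by (simp add: lasso_index_def q_def)
  moreover have "lasso_index a b (Suc n) = a + (if Suc q = b - a then 0 else Suc q)"
    using False by (simp add: lasso_index_def Suc_diff_le mod_Suc q_def)
  ultimately show ?thesis using assms by auto
qed (use assms in \<open>auto simp: lasso_index_def\<close>)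

lemma lasso_index_periodic:
  assumes "a \<le> p" "p < b"
  shows "lasso_index a b (p + k * (b - a)) = p"
proof -
  have "p + k * (b - a) - a = (p - a) + k * (b - a)" using assms by simp
  moreover have "(p - a) mod (b - a) = p - a" using assms by simp
  ultimately have "(p + k * (b - a) - a) mod (b - a) = p - a" by simp
  then show ?thesis using assms by (simp add: lasso_index_def)
qed

lemma lasso_word_eq:
  assumes "a < b"
  shows "x \<circ> lasso_index a b = prefix a x \<frown> (x [a \<rightarrow> b])\<^sup>\<omega>"
proof
  fix n
  have "(n - a) mod (b - a) < b - a" using assms by simp
  then show "(x \<circ> lasso_index a b) n = (prefix a x \<frown> (x [a \<rightarrow> b])\<^sup>\<omega>) n"
    using assms by (simp add: lasso_index_def)
qed

lemma ult_eq_lasso_words: "ult = {x \<circ> lasso_index a b | x a b. a < b}"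
proof (intro equalityI subsetI)
  fix z :: "'a word" assume "z \<in> ult"
  then obtain u v where z: "z = u \<frown> v\<^sup>\<omega>" "v \<noteq> []" unfolding ult_def by blast
  define a where "a = length u"
  define b where "b = length u + length v"
  have "z \<circ> lasso_index a b = z"
  proof
    fix n
    have "(n - a) mod length v < length v" using z(2) by simp
    then show "(z \<circ> lasso_index a b) n = z n"
      using z by (simp add: lasso_index_def a_def b_def)
  qed
  moreover have "a < b" using z(2) by (simp add: a_def b_def)
  ultimately show "z \<in> {x \<circ> lasso_index a b | x a b. a < b}"
    by (intro CollectI exI[of _ z] exI[of _ a] exI[of _ b]) simp
next
  fix z :: "'a word" assume "z \<in> {x \<circ> lasso_index a b | x a b. a < b}"
  then obtain x a b where "a < b" "z = x \<circ> lasso_index a b" by blast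
  then have "z = prefix a x \<frown> (x [a \<rightarrow> b])\<^sup>\<omega>" "x [a \<rightarrow> b] \<noteq> []"
    using lasso_word_eq by auto
  then show "z \<in> ult" unfolding ult_def by blast
qed

lemma buchi_run_lasso:
  assumes run: "buchi_run Qi \<delta> x r" and "a < b" and loop: "r a = r b"
  shows "buchi_run Qi \<delta> (x \<circ> lasso_index a b) (r \<circ> lasso_index a b)"
  unfolding buchi_run_def
proof (intro conjI allI)
  show "(r \<circ> lasso_index a b) 0 \<in> Qi" using run by (simp add: buchi_run_def lasso_index_0)
next
  fix n
  let ?m = "lasso_index a b n"
  have "r (lasso_index a b (Suc n)) = r (Suc ?m)"
    using lasso_index_Suc[OF \<open>a < b\<close>, of n] loop by auto
  moreover have "(r ?m, x ?m, r (Suc ?m)) \<in> \<delta>" using run by (simp add: buchi_run_def)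
  ultimately show "((r \<circ> lasso_index a b) n, (x \<circ> lasso_index a b) n,
      (r \<circ> lasso_index a b) (Suc n)) \<in> \<delta>" by simp
qed

lemma infinite_lasso_visits:
  assumes "a \<le> p" "p < b" "r p \<in> Acc"
  shows "infinite {n. r (lasso_index a b n) \<in> Acc}"
proof -
  have "inj (\<lambda>k. p + k * (b - a))" using assms by (auto intro!: injI)
  then have "infinite (range (\<lambda>k. p + k * (b - a)))" by (rule range_inj_infinite)
  moreover have "range (\<lambda>k. p + k * (b - a)) \<subseteq> {n. r (lasso_index a b n) \<in> Acc}"
    using lasso_index_periodic[OF assms(1,2)] assms(3) by auto
  ultimately show ?thesis using finite_subset by blast
qed

lemma omega_regular_pumping:
  assumes "omega_regular L" "x \<in> L"
  shows "\<exists>(r :: nat \<Rightarrow> nat) Acc. finite (range r) \<and> infinite {n. r n \<in> Acc} \<and>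
    (\<forall>a b. a < b \<and> r a = r b \<and> (\<exists>p\<in>{a..<b}. r p \<in> Acc) \<longrightarrow> x \<circ> lasso_index a b \<in> L)"
proof -
  obtain Q Qi Qf \<delta> where aut: "finite Q" "Qi \<subseteq> Q" "\<delta> \<subseteq> Q \<times> UNIV \<times> Q"
    and L: "L = buchi_lang Q Qi Qf \<delta>" using assms(1) unfolding omega_regular_def by blast
  obtain r where run: "buchi_run Qi \<delta> x r" and acc: "infinite {n. r n \<in> Qf}"
    using assms(2) unfolding L buchi_lang_def by blast
  have "r n \<in> Q" for n
  proof (cases n)
    case (Suc m)
    have "(r m, x m, r n) \<in> \<delta>" using run Suc by (simp add: buchi_run_def)
    then show ?thesis using aut(3) by blast
  qed (use run aut(2) in \<open>auto simp: buchi_run_def\<close>)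
  then have "range r \<subseteq> Q" by auto
  then have "finite (range r)" using aut(1) by (rule finite_subset)
  moreover have "x \<circ> lasso_index a b \<in> L"
    if "a < b" "r a = r b" "p \<in> {a..<b}" "r p \<in> Qf" for a b p
  proof -
    have "infinite {n. (r \<circ> lasso_index a b) n \<in> Qf}"
      using infinite_lasso_visits[of a p b r Qf] that(3,4) by simp
    with buchi_run_lasso[OF run that(1,2)] show ?thesis
      unfolding L buchi_lang_def by blast
  qed
  ultimately show ?thesis using acc by blast
qed

lemma frequent_within_window:
  fixes P :: "'i \<Rightarrow> nat \<Rightarrow> bool"
  assumes "finite I" "\<forall>i\<in>I. infinite {n. P i n}"
  shows "\<exists>N>s. \<forall>i\<in>I. \<exists>p. s \<le> p \<and> p < N \<and> P i p"
proof -
  have "\<forall>i\<in>I. \<exists>p\<ge>s. P i p"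
    using assms(2) unfolding infinite_nat_iff_unbounded_le by blast
  then obtain p where p: "\<forall>i\<in>I. s \<le> p i \<and> P i (p i)" by metis
  define N where "N = Suc (Max (insert s (p ` I)))"
  have "p i < N" if "i \<in> I" for i
    using that assms(1) by (simp add: N_def le_imp_less_Suc)
  moreover have "s < N" using assms(1) by (simp add: N_def le_imp_less_Suc)
  ultimately show ?thesis using p by blast
qed

text \<open>The loop is found by pigeonhole on the joint states at the ends of consecutive windows,
  each window containing an accepting position of every run.\<close>

lemma common_accepting_loop:
  fixes r :: "'i \<Rightarrow> nat \<Rightarrow> 'q"
  assumes fin: "finite I" and states: "\<forall>i\<in>I. finite (range (r i))"
    and acc: "\<forall>i\<in>I. infinite {n. r i n \<in> Acc i}"
  shows "\<exists>a b. a < b \<and> (\<forall>i\<in>I. r i a = r i b \<and> (\<exists>p\<in>{a..<b}. r i p \<in> Acc i))"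
proof -
  have "\<forall>s. \<exists>N>s. \<forall>i\<in>I. \<exists>p. s \<le> p \<and> p < N \<and> r i p \<in> Acc i"
    using frequent_within_window[OF fin, of "\<lambda>i n. r i n \<in> Acc i"] acc by blast
  from choice[OF this] obtain g
    where g: "\<forall>s. s < g s \<and> (\<forall>i\<in>I. \<exists>p. s \<le> p \<and> p < g s \<and> r i p \<in> Acc i)"
    ..
  define t where "t k = (g ^^ k) 0" for k
  have t_Suc: "t (Suc k) = g (t k)" for k by (simp add: t_def)
  have t_mono: "strict_mono t" by (rule strict_monoI_Suc) (simp add: t_Suc g)
  define h where "h k = restrict (\<lambda>i. r i (t k)) I" for k
  have "range h \<subseteq> PiE I (\<lambda>i. range (r i))" by (auto simp: h_def)
  moreover have "finite (PiE I (\<lambda>i. range (r i)))" using fin states by (simp add: finite_PiE)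
  ultimately have "\<not> inj h" using finite_subset range_inj_infinite by blast
  obtain j k where "j < k" "h j = h k"
  proof -
    obtain j k where "j \<noteq> k" "h j = h k" using \<open>\<not> inj h\<close> unfolding inj_def by blast
    then show thesis using that by (metis linorder_neqE_nat)
  qed
  have loop: "r i (t j) = r i (t k)" if "i \<in> I" for i
    using fun_cong[OF \<open>h j = h k\<close>, of i] that by (simp add: h_def)
  have "t (Suc j) \<le> t k"
    using \<open>j < k\<close> t_mono by (simp add: Suc_leI strict_mono_leD)
  have window: "\<exists>p\<in>{t j..<t k}. r i p \<in> Acc i" if "i \<in> I" for i
  proof -
    have "\<exists>p. t j \<le> p \<and> p < g (t j) \<and> r i p \<in> Acc i" using g that by blast
    then obtain p where "t j \<le> p" "p < g (t j)" "r i p \<in> Acc i" by blast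
    then show ?thesis using \<open>t (Suc j) \<le> t k\<close> t_Suc[of j] by auto
  qed
  have "t j < t k" using t_mono \<open>j < k\<close> by (rule strict_monoD)
  then show ?thesis using loop window by blast
qed

lemma Inter_omega_regular_meets_ult:
  fixes F :: "'a word set set"
  assumes fin: "finite F" and reg: "\<forall>L\<in>F. omega_regular L" and x: "x \<in> \<Inter>F"
  shows "\<exists>y\<in>ult. y \<in> \<Inter>F"
proof -
  have "\<forall>L\<in>F. \<exists>(r :: nat \<Rightarrow> nat) Acc. finite (range r) \<and> infinite {n. r n \<in> Acc} \<and>
    (\<forall>a b. a < b \<and> r a = r b \<and> (\<exists>p\<in>{a..<b}. r p \<in> Acc) \<longrightarrow> x \<circ> lasso_index a b \<in> L)"
    using omega_regular_pumping reg x by blast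
  from bchoice[OF this] obtain r :: "'a word set \<Rightarrow> nat \<Rightarrow> nat"
    where r: "\<forall>L\<in>F. \<exists>Acc. finite (range (r L)) \<and> infinite {n. r L n \<in> Acc} \<and>
    (\<forall>a b. a < b \<and> r L a = r L b \<and> (\<exists>p\<in>{a..<b}. r L p \<in> Acc) \<longrightarrow> x \<circ> lasso_index a b \<in> L)"
    ..
  from bchoice[OF r] obtain Acc where Acc: "\<forall>L\<in>F. finite (range (r L)) \<and>
    infinite {n. r L n \<in> Acc L} \<and>
    (\<forall>a b. a < b \<and> r L a = r L b \<and> (\<exists>p\<in>{a..<b}. r L p \<in> Acc L) \<longrightarrow> x \<circ> lasso_index a b \<in> L)"
    ..
  obtain a b where "a < b" "\<forall>L\<in>F. r L a = r L b \<and> (\<exists>p\<in>{a..<b}. r L p \<in> Acc L)"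
    using common_accepting_loop[OF fin, of r Acc] Acc by blast
  then have "x \<circ> lasso_index a b \<in> \<Inter>F" using Acc by blast
  moreover have "x \<circ> lasso_index a b \<in> ult" using \<open>a < b\<close> ult_eq_lasso_words by blast
  ultimately show ?thesis by blast
qed

lemma omega_regular_UNIV: "omega_regular (UNIV :: 'a word set)"
proof -
  have "\<sigma> \<in> buchi_lang {0} {0} {0} ({0::nat} \<times> UNIV \<times> {0})" for \<sigma> :: "'a word"
    unfolding buchi_lang_def by (intro CollectI exI[of _ "\<lambda>_. 0"]) (simp add: buchi_run_def)
  then have "UNIV = buchi_lang {0} {0} {0} ({0::nat} \<times> (UNIV :: 'a set) \<times> {0})" by blast
  then show ?thesis unfolding omega_regular_def
    by (intro exI[of _ "{0}"] exI[of _ "{0::nat} \<times> (UNIV :: 'a set) \<times> {0}"]) simp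
qed

text \<open>In the lasso automaton below the current state determines both the next letter and the
  next state, so it accepts exactly one word.\<close>

lemma omega_regular_lasso_singleton:
  assumes ab: "a < b"
  shows "omega_regular {x \<circ> lasso_index a b}"
proof -
  define f where "f = lasso_index a b"
  define y where "y = x \<circ> f"
  define \<delta> where "\<delta> = {(f k, y k, f (Suc k)) | k. True}"
  have y_f: "y (f n) = y n" for n by (simp add: y_def f_def lasso_index_idem)
  have f_Suc: "f (Suc k) = (if Suc (f k) = b then a else Suc (f k))" for k
    unfolding f_def by (rule lasso_index_Suc[OF ab])
  have f_less: "f n < b" for n unfolding f_def by (rule lasso_index_less[OF ab])
  have "buchi_run {0} \<delta> y f"
    by (auto simp: buchi_run_def \<delta>_def f_def lasso_index_0)
  moreover have "{n. f n \<in> {..<b}} = UNIV" using f_less by auto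
  ultimately have "y \<in> buchi_lang {..<b} {0} {..<b} \<delta>" unfolding buchi_lang_def by auto
  moreover have "\<sigma> = y" if accepted: "\<sigma> \<in> buchi_lang {..<b} {0} {..<b} \<delta>" for \<sigma>
  proof -
    obtain s where s: "buchi_run {0} \<delta> \<sigma> s" using accepted unfolding buchi_lang_def by blast
    have step: "\<sigma> n = y n \<and> s (Suc n) = f (Suc n)" if "s n = f n" for n
    proof -
      obtain k where k: "s n = f k" "\<sigma> n = y k" "s (Suc n) = f (Suc k)"
        using s unfolding buchi_run_def \<delta>_def by blast
      then have "f k = f n" using that by simp
      then show ?thesis using k y_f[of k] y_f[of n] f_Suc[of k] f_Suc[of n] by simp
    qed
    have "s n = f n" for n
      by (induction n) (use s step in \<open>auto simp: buchi_run_def f_def lasso_index_0\<close>)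
    then show "\<sigma> = y" using step by blast
  qed
  ultimately have "{y} = buchi_lang {..<b} {0} {..<b} \<delta>" by blast
  moreover have "\<delta> \<subseteq> {..<b} \<times> UNIV \<times> {..<b}" using f_less by (auto simp: \<delta>_def)
  moreover have "finite {..<b}" "{0} \<subseteq> {..<b}" using ab by auto
  ultimately have "omega_regular {y}" unfolding omega_regular_def by blast
  then show ?thesis by (simp add: y_def f_def)
qed

lemma omega_regular_ult_singleton:
  assumes "z \<in> ult"
  shows "omega_regular {z}"
proof -
  obtain x a b where "a < b" "z = x \<circ> lasso_index a b"
    using assms unfolding ult_eq_lasso_words by blast
  then show ?thesis using omega_regular_lasso_singleton by simp
qed

lemma topspace_tau_C: "topspace (tau_C :: 'a word topology) = UNIV"
proof -
  have "(UNIV :: 'a word set) \<in> {{\<sigma>. \<forall>i<length w. \<sigma> i = w ! i} | w. True}"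
    by (intro CollectI exI[of _ "[]"]) auto
  then show ?thesis unfolding tau_C_def by auto
qed

lemma closedin_tau_C_singleton: "closedin (tau_C :: 'a word topology) {z}"
proof -
  have "\<exists>C. openin tau_C C \<and> y \<in> C \<and> C \<subseteq> - {z}" if "y \<noteq> z" for y
  proof -
    obtain i where i: "y i \<noteq> z i" using \<open>y \<noteq> z\<close> by auto
    define C where "C = {\<sigma>. \<forall>j<length (prefix (Suc i) y). \<sigma> j = prefix (Suc i) y ! j}"
    have "openin tau_C C" unfolding tau_C_def C_def by (rule topology_generated_by_Basis) blast
    moreover have "y \<in> C" by (simp add: C_def del: subseq_to_Suc)
    moreover have "z \<notin> C" using i by (auto simp: C_def simp del: subseq_to_Suc)
    ultimately show ?thesis by blast
  qed
  then have "openin tau_C (- {z})" by (subst openin_subopen) blast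
  then show ?thesis by (simp add: closedin_def topspace_tau_C Compl_eq_Diff_UNIV)
qed

lemma openin_topology_generated_by_finite_Inter:
  assumes "openin (topology_generated_by S) U" "x \<in> U"
  obtains F where "finite F" "F \<subseteq> S" "x \<in> \<Inter>F" "\<Inter>F \<subseteq> U"
proof -
  have "generate_topology_on S U" using assms(1) by (simp add: openin_topology_generated_by_iff)
  then have "(arbitrary union_of finite' intersection_of (\<lambda>L. L \<in> S)) U"
    unfolding generate_topology_on_eq .
  then obtain \<U> where "\<U> \<subseteq> Collect (finite' intersection_of (\<lambda>L. L \<in> S))" "\<Union>\<U> = U"
    by (auto simp: union_of_def)
  then obtain V where "(finite' intersection_of (\<lambda>L. L \<in> S)) V" "x \<in> V" "V \<subseteq> U"
    using assms(2) by blast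
  then show ?thesis using that by (auto simp: intersection_of_def)
qed

lemma ult_meets_open_generated_by_regular:
  assumes "S \<subseteq> {L. omega_regular L}"
    and "openin (topology_generated_by S) U" "x \<in> U"
  shows "\<exists>y\<in>ult. y \<in> U"
proof -
  obtain F where "finite F" "F \<subseteq> S" "x \<in> \<Inter>F" "\<Inter>F \<subseteq> U"
    using openin_topology_generated_by_finite_Inter[OF assms(2,3)] .
  then show ?thesis using Inter_omega_regular_meets_ult[of F x] assms(1) by blast
qed

lemma isolated_points_dense_sets_generated_by_regular:
  fixes S :: "'a word set set" and T :: "'a word topology"
  assumes S_regular: "S \<subseteq> {L. omega_regular L}" and "UNIV \<in> S"
    and ult_singletons: "\<forall>z\<in>ult. {z} \<in> S"
    and T: "T = topology_generated_by S"
  shows "{x. openin T {x}} = ult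
       \<and> T closure_of ult = UNIV
       \<and> (\<forall>D. T closure_of D = UNIV \<longleftrightarrow> ult \<subseteq> D)"
proof -
  have top: "topspace T = UNIV" using \<open>UNIV \<in> S\<close> by (auto simp: T)
  have meets: "\<exists>y\<in>ult. y \<in> U" if "openin T U" "x \<in> U" for U x
    using ult_meets_open_generated_by_regular[OF S_regular, of U x] that unfolding T by blast
  have isolated: "openin T {z}" if "z \<in> ult" for z
    unfolding T by (rule topology_generated_by_Basis) (use ult_singletons that in blast)
  have "x \<in> T closure_of ult" for x
    using meets unfolding in_closure_of top by blast
  then have dense: "T closure_of ult = UNIV" by blast
  have "T closure_of D = UNIV \<longleftrightarrow> ult \<subseteq> D" for D
  proof
    assume closure_D: "T closure_of D = UNIV"
    show "ult \<subseteq> D"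
    proof
      fix z :: "'a word" assume "z \<in> ult"
      then have "z \<in> T closure_of D" "openin T {z}" using closure_D isolated by auto
      then show "z \<in> D" unfolding in_closure_of by blast
    qed
  next
    assume "ult \<subseteq> D"
    then have "T closure_of ult \<subseteq> T closure_of D" by (rule closure_of_mono)
    then show "T closure_of D = UNIV" using dense by blast
  qed
  moreover have "{x. openin T {x}} = ult"
  proof
    show "{x. openin T {x}} \<subseteq> ult" using meets by blast
    show "ult \<subseteq> {x. openin T {x}}" using isolated by blast
  qed
  ultimately show ?thesis using dense by blast
qed

theorem mainTheorem14:
  fixes T :: "('a::finite) word topology"
  assumes "CARD('a) \<ge> 2"
    and "T = tau_B \<or> T = tau_A"
  shows "{x. openin T {x}} = ult
       \<and> T closure_of ult = UNIV
       \<and> (\<forall>D. T closure_of D = UNIV \<longleftrightarrow> ult \<subseteq> D)"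
  using assms(2)
proof
  assume "T = tau_B"
  then show ?thesis
    by (intro isolated_points_dense_sets_generated_by_regular[of "{L. omega_regular L}"])
      (auto simp: tau_B_def omega_regular_UNIV omega_regular_ult_singleton)
next
  assume "T = tau_A"
  moreover have "closedin tau_C (UNIV :: 'a word set)"
    by (metis closedin_topspace topspace_tau_C)
  ultimately show ?thesis
    by (intro isolated_points_dense_sets_generated_by_regular
        [of "{L. omega_regular L \<and> closedin tau_C L}"])
      (auto simp: tau_A_def omega_regular_UNIV omega_regular_ult_singleton closedin_tau_C_singleton)
qed

end
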